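(* Let $N,\mu,\beta,\sigma,\gamma,p>0$ and $0<\rho<1$ and consider $$\begin{aligned}S'&=\mu N-\tfrac{\beta}{N}S(1-\rho)I-\tfrac{p}{N}S-\mu S, & E'&=\tfrac{\beta}{N}S(1-\rho)I-(\sigma+\mu) E, & I'&=\sigma E-(\gamma+\mu) I,\\ R'&=\gamma I-\mu R, & V'&=\tfrac{p}{N}S-\mu V.\end{aligned}$$ Let $\Sigma=\{(S,E,I,R,V)\in\mathbb{R}_+^5:S+E+I+R+V=N\}$, $\Omega=\{(S,E,I)\in\mathbb{R}_+^3:S+E+I\le N\}$ and $\mathcal{R}_0=\dfrac{\mu N\sigma\beta(1-\rho)}{(\sigma+\mu)(\gamma+\mu)(p+\mu N)}$. If $\mathcal{R}_0>1$ and the initial condition $(S_0,E_0,I_0,R(0),V_0)\in\Sigma$ satisfies $(S_0,E_0,I_0)\in\operatorname{int}\Omega$, then the solution converges as $t\to+\infty$ to the endemic equilibrium $P^e=(S^e,E^e,I^e,R^e,V^e)$, where $$S^e=\frac{(\sigma+\mu)(\gamma+\mu)N}{\sigma\beta(1-\rho)},\quad I^e=\frac{\mu N\sigma\beta(1-\rho)-(\sigma+\mu)(\gamma+\mu)(p+\mu N)}{(\sigma+\mu)(\gamma+\mu)\beta(1-\rho)},$$ $$E^e=\frac{\gamma+\mu}{\sigma}I^e,\quad R^e=\frac{\gamma}{\mu}I^e,\quad V^e=\frac{p}{\mu N}S^e.$$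
   Context: SEIR model with vaccination at constant effective rate $p$ and equal birth/death rate $\mu$; $\mathcal{R}_0$ is the reproductive number. *)

theory Defs
  imports "HOL-Analysis.Analysis"
begin

definition SigmaSet :: "real \<Rightarrow> (real \<times> real \<times> real \<times> real \<times> real) set" where
  "SigmaSet N = {(S,E,I,R,V). S \<ge> 0 \<and> E \<ge> 0 \<and> I \<ge> 0 \<and> R \<ge> 0 \<and> V \<ge> 0 \<and> S + E + I + R + V = N}"

definition OmegaSet :: "real \<Rightarrow> (real \<times> real \<times> real) set" where
  "OmegaSet N = {(S,E,I). S \<ge> 0 \<and> E \<ge> 0 \<and> I \<ge> 0 \<and> S + E + I \<le> N}"

definition R0 :: "real \<Rightarrow> real \<Rightarrow> real \<Rightarrow> real \<Rightarrow> real \<Rightarrow> real \<Rightarrow> real \<Rightarrow> real" where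
  "R0 N \<mu> \<beta> \<sigma> \<gamma> p \<rho> =
     (\<mu> * N * \<sigma> * \<beta> * (1 - \<rho>)) / ((\<sigma> + \<mu>) * (\<gamma> + \<mu>) * (p + \<mu> * N))"

end

theory Submission
  imports Defs
begin

(* The (S, E, I) subsystem does not involve R and V. Along it, the Volterra-type function
   L = (S - Se ln S) + (E - Ee ln E) + (sigma + mu)/sigma (I - Ie ln I)
   satisfies L' <= - (p/N + mu) (S - Se)^2 / S: after using the equilibrium equations the
   remaining terms are a negative multiple of r1 + r2 + r3 - 3 for three ratios with product 1,
   which is nonnegative by AM-GM. So L is nonincreasing; its sublevel set keeps S, E, I positive
   and bounded, L converges, and a Barbalat-type argument forces S -> Se. Then S + E, I, R and V
   each satisfy a relaxation equation x' = u - k x whose input u converges, which yields the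
   remaining limits. *)

lemma eventually_at_top_nonnegE:
  fixes P :: "real \<Rightarrow> bool"
  assumes "\<forall>\<^sub>F t in at_top. P t"
  obtains T where "T \<ge> 0" "\<And>t. t \<ge> T \<Longrightarrow> P t"
proof -
  obtain T where "\<And>t. t \<ge> T \<Longrightarrow> P t" using assms by (auto simp: eventually_at_top_linorder)
  then show thesis by (intro that[of "max T 0"]) auto
qed

lemma real_mvt_within:
  fixes f f' :: "real \<Rightarrow> real"
  assumes "a < b" "{a..b} \<subseteq> X"
    and deriv: "\<And>t. t \<in> {a..b} \<Longrightarrow> (f has_real_derivative f' t) (at t within X)"
  shows "\<exists>z\<in>{a<..<b}. f b - f a = (b - a) * f' z"
proof -
  have "(f has_derivative (*) (f' t)) (at t within {a..b})" if "a \<le> t" "t \<le> b" for t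
    using DERIV_subset[OF deriv[of t] assms(2)] that by (simp add: has_field_derivative_def)
  then show ?thesis
    using mvt_simple[OF \<open>a < b\<close>, of f "\<lambda>t. (*) (f' t)"] by (auto simp: mult.commute)
qed

lemma DERIV_within_nonpos_imp_nonincreasing:
  fixes f f' :: "real \<Rightarrow> real"
  assumes "a \<le> b" "{a..b} \<subseteq> X"
    and deriv: "\<And>t. t \<in> {a..b} \<Longrightarrow> (f has_real_derivative f' t) (at t within X)"
    and nonpos: "\<And>t. t \<in> {a..b} \<Longrightarrow> f' t \<le> 0"
  shows "f b \<le> f a"
proof (cases "a = b")
  case False
  then obtain z where "z \<in> {a<..<b}" "f b - f a = (b - a) * f' z"
    using real_mvt_within[of a b X f f'] assms by force
  moreover have "(b - a) * f' z \<le> 0"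
    using nonpos[of z] \<open>z \<in> {a<..<b}\<close> by (intro mult_nonneg_nonpos) auto
  ultimately show ?thesis by simp
qed simp

lemma lipschitz_on_halfline_if_bounded_derivative:
  fixes f f' :: "real \<Rightarrow> real"
  assumes deriv: "\<And>t. t \<ge> 0 \<Longrightarrow> (f has_real_derivative f' t) (at t within {0..})"
    and bound: "\<And>t. t \<ge> 0 \<Longrightarrow> \<bar>f' t\<bar> \<le> B"
  shows "B-lipschitz_on {0..} f"
proof (rule bounded_derivative_imp_lipschitz)
  show "(f has_derivative (*) (f' t)) (at t within {0..})" if "t \<in> {0..}" for t
    using deriv that by (auto simp: has_field_derivative_def)
  show "onorm ((*) (f' t)) \<le> B" if "t \<in> {0..}" for t
    using bound[of t] that by (intro onorm_le) (auto simp: abs_mult intro: mult_right_mono)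
  show "0 \<le> B" using bound[of 0] by simp
qed simp

lemma antimono_bdd_below_tendsto_Inf:
  fixes f :: "real \<Rightarrow> real"
  assumes antimono: "\<And>s t. 0 \<le> s \<Longrightarrow> s \<le> t \<Longrightarrow> f t \<le> f s"
    and bdd: "\<And>t. t \<ge> 0 \<Longrightarrow> B \<le> f t"
  shows "(f \<longlongrightarrow> Inf (f ` {0..})) at_top"
proof (rule decreasing_tendsto)
  have bdd': "bdd_below (f ` {0..})" using bdd by (auto simp: bdd_below_def)
  show "\<forall>\<^sub>F t in at_top. Inf (f ` {0..}) \<le> f t"
    using eventually_ge_at_top[of 0] by eventually_elim (simp add: cInf_lower bdd')
  fix x assume "Inf (f ` {0..}) < x"
  then obtain T where T: "T \<ge> 0" "f T < x" using bdd' by (auto simp: cInf_less_iff)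
  then have "f t < x" if "t \<ge> T" for t using antimono[of T t] that by linarith
  then show "\<forall>\<^sub>F t in at_top. f t < x"
    by (auto simp: eventually_at_top_linorder)
qed

lemma barbalat_tendsto_zero:
  fixes f f' u :: "real \<Rightarrow> real"
  assumes lim: "(f \<longlongrightarrow> l) at_top"
    and deriv: "\<And>t. t \<ge> 0 \<Longrightarrow> (f has_real_derivative f' t) (at t within {0..})"
    and "c > 0" and dominated: "\<And>t. t \<ge> 0 \<Longrightarrow> f' t \<le> - c * u t"
    and lip: "K-lipschitz_on {0..} u"
    and nonneg: "\<And>t. t \<ge> 0 \<Longrightarrow> 0 \<le> u t"
  shows "(u \<longlongrightarrow> 0) at_top"
proof (rule order_tendstoI)
  fix a :: real assume "a < 0"
  then show "\<forall>\<^sub>F t in at_top. a < u t"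
    by (intro eventually_at_top_linorderI[of 0]) (use nonneg in force)
next
  fix \<epsilon> :: real assume "\<epsilon> > 0"
  have "K \<ge> 0" using lip by (simp add: lipschitz_on_def)
  define \<delta> where "\<delta> = \<epsilon> / (2 * (K + 1))"
  have "\<delta> > 0" "K * \<delta> < \<epsilon> / 2"
    using \<open>K \<ge> 0\<close> \<open>\<epsilon> > 0\<close> by (auto simp: \<delta>_def field_simps)
  have "\<forall>\<^sub>F t in at_top. dist (f t) l < c * \<epsilon> * \<delta> / 4"
    using lim \<open>c > 0\<close> \<open>\<epsilon> > 0\<close> \<open>\<delta> > 0\<close> by (intro tendstoD) auto
  then obtain T where T: "T \<ge> 0" "\<And>t. t \<ge> T \<Longrightarrow> \<bar>f t - l\<bar> < c * \<epsilon> * \<delta> / 4"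
    by (auto simp: dist_real_def elim: eventually_at_top_nonnegE)
  have "u t < \<epsilon>" if "t \<ge> T" for t
  proof (rule ccontr)
    assume "\<not> u t < \<epsilon>"
    have "t \<ge> 0" using T(1) that by linarith
    obtain z where z: "z \<in> {t<..<t + \<delta>}" "f (t + \<delta>) - f t = \<delta> * f' z"
      using real_mvt_within[of t "t + \<delta>" "{0..}" f f'] deriv \<open>\<delta> > 0\<close> \<open>t \<ge> 0\<close> by auto
    \<comment> \<open>the Lipschitz bound keeps u above \<epsilon>/2 on the whole window, so f drops by a fixed amount\<close>
    have "\<bar>u z - u t\<bar> \<le> K * (z - t)"
      using lipschitz_onD[OF lip, of z t] z \<open>t \<ge> 0\<close> by (simp add: dist_real_def)
    also have "\<dots> \<le> K * \<delta>" using z \<open>K \<ge> 0\<close> by (intro mult_left_mono) auto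
    finally have "u z > \<epsilon> / 2" using \<open>\<not> u t < \<epsilon>\<close> \<open>K * \<delta> < \<epsilon> / 2\<close> by linarith
    then have "c * (\<epsilon> / 2) < c * u z" using \<open>c > 0\<close> by (rule mult_strict_left_mono)
    then have "f' z < - (c * \<epsilon> / 2)" using dominated[of z] z \<open>t \<ge> 0\<close> by simp
    then have "\<delta> * f' z < \<delta> * - (c * \<epsilon> / 2)" using \<open>\<delta> > 0\<close> by (rule mult_strict_left_mono)
    then have "f (t + \<delta>) - f t < - c * \<epsilon> * \<delta> / 2" using z by (simp add: algebra_simps)
    moreover have "\<bar>f (t + \<delta>) - f t\<bar> < c * \<epsilon> * \<delta> / 2"
      using T(2)[of t] T(2)[of "t + \<delta>"] that \<open>\<delta> > 0\<close> by linarith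
    ultimately show False by linarith
  qed
  then show "\<forall>\<^sub>F t in at_top. u t < \<epsilon>"
    by (auto simp: eventually_at_top_linorder)
qed

lemma relaxation_ODE_eventually_below:
  fixes x u :: "real \<Rightarrow> real"
  assumes "\<mu> > 0"
    and deriv: "\<And>t. t \<ge> 0 \<Longrightarrow> (x has_real_derivative u t - \<mu> * x t) (at t within {0..})"
    and lim: "(u \<longlongrightarrow> l) at_top"
    and "l / \<mu> < c"
  shows "\<forall>\<^sub>F t in at_top. x t < c"
proof -
  define m where "m = l / \<mu>"
  define \<epsilon> where "\<epsilon> = (c - m) / 2"
  have "l = \<mu> * m" using \<open>\<mu> > 0\<close> by (simp add: m_def)
  have "m < c" using \<open>l / \<mu> < c\<close> by (simp add: m_def)
  then have "\<epsilon> > 0" by (simp add: \<epsilon>_def)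
  have "c = m + 2 * \<epsilon>" by (simp add: \<epsilon>_def field_simps)
  have "\<forall>\<^sub>F t in at_top. u t < l + \<mu> * \<epsilon>"
    using lim \<open>\<mu> > 0\<close> \<open>\<epsilon> > 0\<close> by (intro order_tendstoD) auto
  then obtain T where T: "T \<ge> 0" "\<And>t. t \<ge> T \<Longrightarrow> u t < l + \<mu> * \<epsilon>"
    by (auto elim: eventually_at_top_nonnegE)
  \<comment> \<open>integrating factor: \<phi> is nonincreasing as soon as u < l + \<mu>\<epsilon>\<close>
  define \<phi> where "\<phi> t = (x t - m - \<epsilon>) * exp (\<mu> * t)" for t
  define \<phi>' where "\<phi>' t = (u t - l - \<mu> * \<epsilon>) * exp (\<mu> * t)" for t
  have "(\<phi> has_real_derivative \<phi>' t) (at t within {0..})" if "t \<ge> 0" for t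
    unfolding \<phi>_def \<phi>'_def \<open>l = \<mu> * m\<close>
    by (auto intro!: derivative_eq_intros deriv[OF that] simp: algebra_simps)
  moreover have "\<phi>' t \<le> 0" if "t \<ge> T" for t
    using T(2)[OF that] by (simp add: \<phi>'_def mult_nonpos_nonneg)
  ultimately have decreasing: "\<phi> t \<le> \<phi> T" if "t \<ge> T" for t
    using T(1) that by (intro DERIV_within_nonpos_imp_nonincreasing[of T t "{0..}" \<phi> \<phi>']) auto
  have below: "x t - m - \<epsilon> \<le> \<phi> T * exp (- \<mu> * t)" if "t \<ge> T" for t
  proof -
    have "(x t - m - \<epsilon>) * exp (\<mu> * t) \<le> \<phi> T"
      using decreasing[OF that] by (simp add: \<phi>_def)
    then show ?thesis by (simp add: exp_minus divide_inverse[symmetric] pos_le_divide_eq)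
  qed
  have "filterlim (\<lambda>t. - \<mu> * t) at_bot at_top"
    using \<open>\<mu> > 0\<close> by (intro filterlim_tendsto_neg_mult_at_bot[OF tendsto_const] filterlim_ident) auto
  then have "((\<lambda>t. \<phi> T * exp (- \<mu> * t)) \<longlongrightarrow> 0) at_top"
    by (intro tendsto_mult_right_zero filterlim_compose[OF exp_at_bot])
  then have "\<forall>\<^sub>F t in at_top. \<phi> T * exp (- \<mu> * t) < \<epsilon>"
    using \<open>\<epsilon> > 0\<close> by (intro order_tendstoD) auto
  then show ?thesis
  proof (rule eventually_mono[OF eventually_conj[OF eventually_ge_at_top[of T]]])
    fix t assume "T \<le> t \<and> \<phi> T * exp (- \<mu> * t) < \<epsilon>"
    then show "x t < c" using below[of t] \<open>c = m + 2 * \<epsilon>\<close> by linarith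
  qed
qed

lemma relaxation_ODE_tendsto:
  fixes x u :: "real \<Rightarrow> real"
  assumes "\<mu> > 0"
    and deriv: "\<And>t. t \<ge> 0 \<Longrightarrow> (x has_real_derivative u t - \<mu> * x t) (at t within {0..})"
    and lim: "(u \<longlongrightarrow> l) at_top"
  shows "(x \<longlongrightarrow> l / \<mu>) at_top"
proof (rule order_tendstoI)
  fix c assume "c < l / \<mu>"
  have "((\<lambda>t. - x t) has_real_derivative - u t - \<mu> * - x t) (at t within {0..})" if "t \<ge> 0" for t
    using DERIV_minus[OF deriv[OF that]] by simp
  moreover have "((\<lambda>t. - u t) \<longlongrightarrow> - l) at_top" using lim by (rule tendsto_minus)
  moreover have "- l / \<mu> < - c" using \<open>c < l / \<mu>\<close> by simp
  ultimately have "\<forall>\<^sub>F t in at_top. - x t < - c"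
    by (rule relaxation_ODE_eventually_below[OF \<open>\<mu> > 0\<close>])
  then show "\<forall>\<^sub>F t in at_top. c < x t" by simp
qed (rule relaxation_ODE_eventually_below[OF assms])

lemma positive_if_bounded_away_while_positive:
  fixes g :: "real \<Rightarrow> real"
  assumes cont: "continuous_on {0..} g" and "g 0 > 0" and "m > 0"
    and away: "\<And>t. t \<ge> 0 \<Longrightarrow> (\<And>s. s \<in> {0..t} \<Longrightarrow> g s > 0) \<Longrightarrow> m \<le> g t"
    and "t \<ge> 0"
  shows "g t > 0"
proof (rule ccontr)
  assume "\<not> g t > 0"
  define Z where "Z = {0..} \<inter> g -` {..0}"
  have "t \<in> Z" using \<open>t \<ge> 0\<close> \<open>\<not> g t > 0\<close> by (simp add: Z_def)
  have "closed Z" unfolding Z_def by (intro continuous_closed_preimage cont) auto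
  have "bdd_below Z" by (auto simp: Z_def bdd_below_def)
  define T where "T = Inf Z"
  have "T \<in> Z" unfolding T_def using closed_contains_Inf \<open>t \<in> Z\<close> \<open>bdd_below Z\<close> \<open>closed Z\<close> by blast
  then have "T > 0" using \<open>g 0 > 0\<close> by (cases "T = 0") (auto simp: Z_def)
  have "m \<le> g s" if "s \<in> {0..<T}" for s
  proof (rule away)
    fix r assume "r \<in> {0..s}"
    then have "r \<notin> Z" using cInf_lower[OF _ \<open>bdd_below Z\<close>, of r] that by (force simp: T_def)
    then show "g r > 0" using \<open>r \<in> {0..s}\<close> by (auto simp: Z_def)
  qed (use that in auto)
  \<comment> \<open>by continuity the bound persists up to the first zero T of g\<close>
  then have "{0..<T} \<subseteq> {0..T} \<inter> g -` {m..}" by auto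
  moreover have "closed ({0..T} \<inter> g -` {m..})"
    by (intro continuous_closed_preimage continuous_on_subset[OF cont]) auto
  ultimately have "closure {0..<T} \<subseteq> {0..T} \<inter> g -` {m..}" by (rule closure_minimal)
  moreover have "T \<in> closure {0..<T}" using \<open>T > 0\<close> by (simp add: closure_atLeastLessThan)
  ultimately have "m \<le> g T" by blast
  then show False using \<open>T \<in> Z\<close> \<open>m > 0\<close> by (auto simp: Z_def)
qed

lemma AM_GM_three:
  fixes u v w :: real
  assumes "u > 0" "v > 0" "w > 0" "u * v * w = 1"
  shows "3 \<le> u + v + w"
proof -
  define a b c where "a = root 3 u" and "b = root 3 v" and "c = root 3 w"
  have cubes: "a ^ 3 = u" "b ^ 3 = v" "c ^ 3 = w" using assms by (auto simp: a_def b_def c_def)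
  have "a > 0" "b > 0" "c > 0" using assms by (auto simp: a_def b_def c_def)
  have "(a * b * c) ^ 3 = 1 ^ 3" using cubes assms(4) by (simp add: power_mult_distrib)
  moreover have "0 \<le> a * b * c" using \<open>a > 0\<close> \<open>b > 0\<close> \<open>c > 0\<close> by simp
  ultimately have "a * b * c = 1" by (rule power_eq_imp_eq_base) simp_all
  have "a ^ 3 + b ^ 3 + c ^ 3 - 3 * (a * b * c) = (a + b + c) * ((a - b)\<^sup>2 + (b - c)\<^sup>2 + (c - a)\<^sup>2) / 2"
    by (simp add: algebra_simps power2_eq_square power3_eq_cube)
  also have "\<dots> \<ge> 0" using \<open>a > 0\<close> \<open>b > 0\<close> \<open>c > 0\<close> by simp
  finally show ?thesis using cubes \<open>a * b * c = 1\<close> by simp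
qed

definition volterra :: "real \<Rightarrow> real \<Rightarrow> real" where
  "volterra c x = x - c * ln x"

lemma volterra_ge_min:
  assumes "c > 0" "x > 0"
  shows "volterra c c \<le> volterra c x"
proof -
  have "ln (x / c) \<le> x / c - 1" using assms by (intro ln_le_minus_one) auto
  then have "c * (ln x - ln c) \<le> c * (x / c - 1)" using assms by (simp add: ln_div)
  then show ?thesis using assms by (simp add: volterra_def algebra_simps)
qed

lemma volterra_sublevel_bounded:
  assumes "c > 0"
  obtains m M where "m > 0" "\<And>x. x > 0 \<Longrightarrow> volterra c x \<le> C \<Longrightarrow> m \<le> x \<and> x \<le> M"
proof
  fix x assume "x > 0" "volterra c x \<le> C"
  have "- C / c \<le> ln x"
    using assms \<open>x > 0\<close> \<open>volterra c x \<le> C\<close> by (simp add: volterra_def field_simps)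
  then show "exp (- C / c) \<le> x \<and> x \<le> 2 * (C + c * ln (2 * c) - c)"
  proof (intro conjI)
    show "exp (- C / c) \<le> x" using \<open>- C / c \<le> ln x\<close> \<open>x > 0\<close> by (metis exp_le_cancel_iff exp_ln)
    have "ln (x / (2 * c)) \<le> x / (2 * c) - 1" using assms \<open>x > 0\<close> by (intro ln_le_minus_one) auto
    then have "c * (ln x - ln (2 * c)) \<le> c * (x / (2 * c) - 1)"
      using assms \<open>x > 0\<close> by (simp add: ln_div)
    then show "x \<le> 2 * (C + c * ln (2 * c) - c)"
      using assms \<open>volterra c x \<le> C\<close> by (simp add: volterra_def algebra_simps)
  qed
qed simp

lemma interior_OmegaSet_pos:
  assumes "(x, y, z) \<in> interior (OmegaSet N)"
  shows "x > 0" "y > 0" "z > 0"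
proof -
  obtain e where "e > 0" and ball: "ball (x, y, z) e \<subseteq> OmegaSet N" using assms mem_interior by blast
  have "(x - e/2, y, z) \<in> ball (x, y, z) e" "(x, y - e/2, z) \<in> ball (x, y, z) e"
    "(x, y, z - e/2) \<in> ball (x, y, z) e"
    using \<open>e > 0\<close> by (auto simp: dist_Pair_Pair dist_real_def)
  then have "(x - e/2, y, z) \<in> OmegaSet N" "(x, y - e/2, z) \<in> OmegaSet N" "(x, y, z - e/2) \<in> OmegaSet N"
    using ball by auto
  then show "x > 0" "y > 0" "z > 0" using \<open>e > 0\<close> by (auto simp: OmegaSet_def)
qed

locale SEI_endemic =
  fixes \<Lambda> \<alpha> \<delta> \<sigma> \<kappa>\<^sub>E \<kappa>\<^sub>I Se Ee Ie :: real and S E I :: "real \<Rightarrow> real"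
  assumes rates_pos: "\<alpha> > 0" "\<delta> > 0" "\<sigma> > 0" "\<kappa>\<^sub>E > 0" "\<kappa>\<^sub>I > 0"
    and equilibrium_pos: "Se > 0" "Ee > 0" "Ie > 0"
    and equilibrium: "\<Lambda> = \<alpha> * Se * Ie + \<delta> * Se" "\<kappa>\<^sub>E * Ee = \<alpha> * Se * Ie" "\<kappa>\<^sub>I * Ie = \<sigma> * Ee"
    and dS: "\<And>t. t \<ge> 0 \<Longrightarrow> (S has_real_derivative \<Lambda> - \<alpha> * S t * I t - \<delta> * S t) (at t within {0..})"
    and dE: "\<And>t. t \<ge> 0 \<Longrightarrow> (E has_real_derivative \<alpha> * S t * I t - \<kappa>\<^sub>E * E t) (at t within {0..})"
    and dI: "\<And>t. t \<ge> 0 \<Longrightarrow> (I has_real_derivative \<sigma> * E t - \<kappa>\<^sub>I * I t) (at t within {0..})"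
    and initial_pos: "S 0 > 0" "E 0 > 0" "I 0 > 0"
begin

text \<open>The weight of the I term cancels the terms linear in E from the E and I equations.\<close>
definition lyapunov :: "real \<Rightarrow> real" where
  "lyapunov t = volterra Se (S t) + volterra Ee (E t) + \<kappa>\<^sub>E / \<sigma> * volterra Ie (I t)"

definition lyapunov_rate :: "real \<Rightarrow> real \<Rightarrow> real \<Rightarrow> real" where
  "lyapunov_rate x y z = (1 - Se / x) * (\<Lambda> - \<alpha> * x * z - \<delta> * x)
     + (1 - Ee / y) * (\<alpha> * x * z - \<kappa>\<^sub>E * y) + \<kappa>\<^sub>E / \<sigma> * (1 - Ie / z) * (\<sigma> * y - \<kappa>\<^sub>I * z)"

lemma lyapunov_rate_le:
  assumes "x > 0" "y > 0" "z > 0"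
  shows "lyapunov_rate x y z \<le> - \<delta> * (x - Se)\<^sup>2 / x"
proof -
  define ratio_sum where "ratio_sum = Se / x + x * z * Ee / (Se * Ie * y) + y * Ie / (Ee * z)"
  have \<kappa>\<^sub>E: "\<kappa>\<^sub>E = \<alpha> * Se * Ie / Ee" and \<kappa>\<^sub>I: "\<kappa>\<^sub>I = \<sigma> * Ee / Ie"
    using equilibrium(2,3) equilibrium_pos by (simp_all add: field_simps)
  have "lyapunov_rate x y z = - \<delta> * (x - Se)\<^sup>2 / x - \<alpha> * Se * Ie * (ratio_sum - 3)"
    unfolding lyapunov_rate_def ratio_sum_def unfolding \<kappa>\<^sub>E \<kappa>\<^sub>I equilibrium(1)
    using assms rates_pos equilibrium_pos by (simp add: field_simps power2_eq_square)
  moreover have "3 \<le> ratio_sum"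
    unfolding ratio_sum_def using assms equilibrium_pos by (intro AM_GM_three) (auto simp: field_simps)
  ultimately show ?thesis using rates_pos equilibrium_pos by simp
qed

lemma lyapunov_has_real_derivative:
  assumes "t \<ge> 0" "S t > 0" "E t > 0" "I t > 0"
  shows "(lyapunov has_real_derivative lyapunov_rate (S t) (E t) (I t)) (at t within {0..})"
  unfolding lyapunov_def[abs_def] volterra_def lyapunov_rate_def using assms rates_pos
  by (auto intro!: derivative_eq_intros dS dE dI simp: field_simps)

lemma lyapunov_nonincreasing:
  assumes "0 \<le> a" "a \<le> b" and pos: "\<And>t. t \<in> {a..b} \<Longrightarrow> S t > 0 \<and> E t > 0 \<and> I t > 0"
  shows "lyapunov b \<le> lyapunov a"
proof (rule DERIV_within_nonpos_imp_nonincreasing[OF \<open>a \<le> b\<close>, of "{0..}"])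
  fix t assume "t \<in> {a..b}"
  then show "(lyapunov has_real_derivative lyapunov_rate (S t) (E t) (I t)) (at t within {0..})"
    using lyapunov_has_real_derivative pos \<open>0 \<le> a\<close> by auto
  have "- \<delta> * (S t - Se)\<^sup>2 / S t \<le> 0" using pos[OF \<open>t \<in> {a..b}\<close>] rates_pos by simp
  then show "lyapunov_rate (S t) (E t) (I t) \<le> 0"
    using lyapunov_rate_le pos[OF \<open>t \<in> {a..b}\<close>] by (meson order_trans)
qed (use \<open>0 \<le> a\<close> in auto)

lemma lyapunov_lower_bound:
  assumes "S t > 0" "E t > 0" "I t > 0"
  shows "volterra Se Se + volterra Ee Ee + \<kappa>\<^sub>E / \<sigma> * volterra Ie Ie \<le> lyapunov t"
  unfolding lyapunov_def using assms equilibrium_pos rates_pos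
  by (intro add_mono mult_left_mono volterra_ge_min) auto

lemma lyapunov_sublevel_bounded:
  obtains m M where "m > 0"
    "\<And>t. S t > 0 \<Longrightarrow> E t > 0 \<Longrightarrow> I t > 0 \<Longrightarrow> lyapunov t \<le> lyapunov 0 \<Longrightarrow>
       m \<le> S t \<and> S t \<le> M \<and> m \<le> E t \<and> E t \<le> M \<and> m \<le> I t \<and> I t \<le> M"
proof -
  define w where "w = \<kappa>\<^sub>E / \<sigma>"
  have "w > 0" using rates_pos by (simp add: w_def)
  obtain mS MS where "mS > 0" and S_bound: "\<And>x. x > 0 \<Longrightarrow>
      volterra Se x \<le> lyapunov 0 - volterra Ee Ee - w * volterra Ie Ie \<Longrightarrow> mS \<le> x \<and> x \<le> MS"
    using volterra_sublevel_bounded[OF equilibrium_pos(1)] by blast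
  obtain mE ME where "mE > 0" and E_bound: "\<And>y. y > 0 \<Longrightarrow>
      volterra Ee y \<le> lyapunov 0 - volterra Se Se - w * volterra Ie Ie \<Longrightarrow> mE \<le> y \<and> y \<le> ME"
    using volterra_sublevel_bounded[OF equilibrium_pos(2)] by blast
  obtain mI MI where "mI > 0" and I_bound: "\<And>z. z > 0 \<Longrightarrow>
      volterra Ie z \<le> (lyapunov 0 - volterra Se Se - volterra Ee Ee) / w \<Longrightarrow> mI \<le> z \<and> z \<le> MI"
    using volterra_sublevel_bounded[OF equilibrium_pos(3)] by blast
  show thesis
  proof (rule that[of "min mS (min mE mI)" "max MS (max ME MI)"])
    fix t assume pos: "S t > 0" "E t > 0" "I t > 0" and "lyapunov t \<le> lyapunov 0"
    then have sum: "volterra Se (S t) + volterra Ee (E t) + w * volterra Ie (I t) \<le> lyapunov 0"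
      by (simp add: lyapunov_def w_def)
    have mins: "volterra Se Se \<le> volterra Se (S t)" "volterra Ee Ee \<le> volterra Ee (E t)"
      "w * volterra Ie Ie \<le> w * volterra Ie (I t)"
      using pos equilibrium_pos \<open>w > 0\<close> by (auto intro: mult_left_mono volterra_ge_min)
    have "mS \<le> S t \<and> S t \<le> MS" using pos sum mins by (intro S_bound) linarith+
    moreover have "mE \<le> E t \<and> E t \<le> ME" using pos sum mins by (intro E_bound) linarith+
    moreover have "w * volterra Ie (I t) \<le> lyapunov 0 - volterra Se Se - volterra Ee Ee"
      using sum mins by linarith
    then have "mI \<le> I t \<and> I t \<le> MI"
      using pos \<open>w > 0\<close> by (intro I_bound) (auto simp: pos_le_divide_eq mult.commute)
    ultimately show "min mS (min mE mI) \<le> S t \<and> S t \<le> max MS (max ME MI) \<and>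
      min mS (min mE mI) \<le> E t \<and> E t \<le> max MS (max ME MI) \<and>
      min mS (min mE mI) \<le> I t \<and> I t \<le> max MS (max ME MI)" by linarith
  qed (use \<open>mS > 0\<close> \<open>mE > 0\<close> \<open>mI > 0\<close> in simp)
qed

lemma positive:
  assumes "t \<ge> 0"
  shows "S t > 0 \<and> E t > 0 \<and> I t > 0"
proof -
  obtain m M where "m > 0" and bounds: "\<And>t. S t > 0 \<Longrightarrow> E t > 0 \<Longrightarrow> I t > 0 \<Longrightarrow>
      lyapunov t \<le> lyapunov 0 \<Longrightarrow> m \<le> S t \<and> S t \<le> M \<and> m \<le> E t \<and> E t \<le> M \<and> m \<le> I t \<and> I t \<le> M"
    by (fact lyapunov_sublevel_bounded)
  define g where "g t = min (S t) (min (E t) (I t))" for t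
  have "continuous_on {0..} g"
    unfolding g_def using dS dE dI by (intro continuous_intros DERIV_continuous_on) auto
  moreover have "g 0 > 0" using initial_pos by (simp add: g_def)
  moreover have "m \<le> g t" if "t \<ge> 0" and "\<And>s. s \<in> {0..t} \<Longrightarrow> g s > 0" for t
  proof -
    have pos: "S s > 0 \<and> E s > 0 \<and> I s > 0" if "s \<in> {0..t}" for s
      using \<open>\<And>s. s \<in> {0..t} \<Longrightarrow> g s > 0\<close>[OF that] by (simp add: g_def)
    then have "lyapunov t \<le> lyapunov 0" using \<open>t \<ge> 0\<close> by (intro lyapunov_nonincreasing) auto
    then show ?thesis using bounds[of t] pos[of t] \<open>t \<ge> 0\<close> by (simp add: g_def)
  qed
  ultimately have "g t > 0"
    using positive_if_bounded_away_while_positive[of g m t] \<open>m > 0\<close> \<open>t \<ge> 0\<close> by blast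
  then show ?thesis by (simp add: g_def)
qed

lemma bounded:
  obtains M where "\<And>t. t \<ge> 0 \<Longrightarrow> S t \<le> M \<and> E t \<le> M \<and> I t \<le> M"
proof -
  obtain m M where "m > 0" and bounds: "\<And>t. S t > 0 \<Longrightarrow> E t > 0 \<Longrightarrow> I t > 0 \<Longrightarrow>
      lyapunov t \<le> lyapunov 0 \<Longrightarrow> m \<le> S t \<and> S t \<le> M \<and> m \<le> E t \<and> E t \<le> M \<and> m \<le> I t \<and> I t \<le> M"
    by (fact lyapunov_sublevel_bounded)
  show thesis
  proof (rule that)
    fix t :: real assume "t \<ge> 0"
    have "lyapunov t \<le> lyapunov 0"
      using \<open>t \<ge> 0\<close> by (rule lyapunov_nonincreasing[OF order_refl]) (simp add: positive)
    then show "S t \<le> M \<and> E t \<le> M \<and> I t \<le> M" using bounds[of t] positive[OF \<open>t \<ge> 0\<close>] by simp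
  qed
qed

lemma S_tendsto: "(S \<longlongrightarrow> Se) at_top"
proof -
  obtain M where M: "\<And>t. t \<ge> 0 \<Longrightarrow> S t \<le> M \<and> E t \<le> M \<and> I t \<le> M" using bounded by blast
  have "M > 0" using M[of 0] positive[of 0] by auto
  have "\<Lambda> > 0" using equilibrium(1) rates_pos equilibrium_pos by (simp add: add_pos_pos)
  have "(lyapunov \<longlongrightarrow> Inf (lyapunov ` {0..})) at_top"
  proof (rule antimono_bdd_below_tendsto_Inf)
    show "lyapunov t \<le> lyapunov s" if "0 \<le> s" "s \<le> t" for s t
      using that positive by (intro lyapunov_nonincreasing) auto
    show "volterra Se Se + volterra Ee Ee + \<kappa>\<^sub>E / \<sigma> * volterra Ie Ie \<le> lyapunov t" if "t \<ge> 0" for t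
      using positive[OF that] by (intro lyapunov_lower_bound) auto
  qed
  moreover have "(lyapunov has_real_derivative lyapunov_rate (S t) (E t) (I t)) (at t within {0..})"
    if "t \<ge> 0" for t using positive[OF that] that by (intro lyapunov_has_real_derivative) auto
  moreover have "lyapunov_rate (S t) (E t) (I t) \<le> - (\<delta> / M) * (S t - Se)\<^sup>2" if "t \<ge> 0" for t
  proof -
    have "\<delta> * (S t - Se)\<^sup>2 / M \<le> \<delta> * (S t - Se)\<^sup>2 / S t"
      using M[OF that] positive[OF that] rates_pos by (intro divide_left_mono) auto
    then show ?thesis using lyapunov_rate_le[of "S t" "E t" "I t"] positive[OF that] by simp
  qed
  moreover have "(2 * (M + Se) * (\<Lambda> + \<alpha> * M * M + \<delta> * M))-lipschitz_on {0..} (\<lambda>t. (S t - Se)\<^sup>2)"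
  proof (rule lipschitz_on_halfline_if_bounded_derivative)
    show "((\<lambda>t. (S t - Se)\<^sup>2) has_real_derivative
        2 * (S t - Se) * (\<Lambda> - \<alpha> * S t * I t - \<delta> * S t)) (at t within {0..})" if "t \<ge> 0" for t
      by (auto intro!: derivative_eq_intros dS[OF that])
    fix t :: real assume "t \<ge> 0"
    have "0 < S t" "S t \<le> M" "0 < I t" "I t \<le> M" using M[OF \<open>t \<ge> 0\<close>] positive[OF \<open>t \<ge> 0\<close>] by auto
    then have "0 \<le> \<alpha> * S t * I t" "\<alpha> * S t * I t \<le> \<alpha> * M * M" "0 \<le> \<delta> * S t" "\<delta> * S t \<le> \<delta> * M"
      using rates_pos by (simp_all add: mult_mono)
    then have "\<bar>\<Lambda> - \<alpha> * S t * I t - \<delta> * S t\<bar> \<le> \<Lambda> + \<alpha> * M * M + \<delta> * M"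
      using \<open>\<Lambda> > 0\<close> by (simp add: abs_le_iff)
    moreover have "\<bar>2 * (S t - Se)\<bar> \<le> 2 * (M + Se)"
      using \<open>0 < S t\<close> \<open>S t \<le> M\<close> equilibrium_pos by (auto simp: abs_le_iff)
    ultimately show "\<bar>2 * (S t - Se) * (\<Lambda> - \<alpha> * S t * I t - \<delta> * S t)\<bar> \<le> 2 * (M + Se) * (\<Lambda> + \<alpha> * M * M + \<delta> * M)"
      unfolding abs_mult by (intro mult_mono) (use \<open>M > 0\<close> equilibrium_pos in auto)
  qed
  ultimately have "((\<lambda>t. (S t - Se)\<^sup>2) \<longlongrightarrow> 0) at_top"
    using rates_pos \<open>M > 0\<close> by (intro barbalat_tendsto_zero[of lyapunov _ _ "\<delta> / M"]) auto
  then have "((\<lambda>t. \<bar>S t - Se\<bar>) \<longlongrightarrow> 0) at_top"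
    using tendsto_real_sqrt by fastforce
  then show ?thesis by (simp add: tendsto_rabs_zero_iff LIM_zero_iff)
qed

lemma E_tendsto: "(E \<longlongrightarrow> Ee) at_top"
proof -
  \<comment> \<open>S + E relaxes towards a limit driven by S alone\<close>
  have "((\<lambda>t. S t + E t) has_real_derivative (\<Lambda> + (\<kappa>\<^sub>E - \<delta>) * S t) - \<kappa>\<^sub>E * (S t + E t))
      (at t within {0..})" if "t \<ge> 0" for t
    using DERIV_add[OF dS[OF that] dE[OF that]] by (simp add: algebra_simps)
  moreover have "((\<lambda>t. \<Lambda> + (\<kappa>\<^sub>E - \<delta>) * S t) \<longlongrightarrow> \<Lambda> + (\<kappa>\<^sub>E - \<delta>) * Se) at_top"
    by (intro tendsto_intros S_tendsto)
  ultimately have "((\<lambda>t. S t + E t) \<longlongrightarrow> (\<Lambda> + (\<kappa>\<^sub>E - \<delta>) * Se) / \<kappa>\<^sub>E) at_top"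
    using rates_pos by (intro relaxation_ODE_tendsto) auto
  then have "((\<lambda>t. (S t + E t) - S t) \<longlongrightarrow> (\<Lambda> + (\<kappa>\<^sub>E - \<delta>) * Se) / \<kappa>\<^sub>E - Se) at_top"
    by (intro tendsto_diff S_tendsto)
  moreover have "(\<Lambda> + (\<kappa>\<^sub>E - \<delta>) * Se) / \<kappa>\<^sub>E - Se = Ee"
    using equilibrium rates_pos by (simp add: field_simps)
  ultimately show ?thesis by simp
qed

lemma I_tendsto: "(I \<longlongrightarrow> Ie) at_top"
proof -
  have "(I \<longlongrightarrow> \<sigma> * Ee / \<kappa>\<^sub>I) at_top"
    using relaxation_ODE_tendsto[OF rates_pos(5) dI tendsto_mult_left[OF E_tendsto]] .
  moreover have "\<sigma> * Ee / \<kappa>\<^sub>I = Ie" using equilibrium(3) rates_pos by (simp add: field_simps)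
  ultimately show ?thesis by simp
qed

end

lemma SEIRV_endemic_equilibrium:
  fixes N \<mu> \<beta> \<sigma> \<gamma> p \<rho> Se Ee Ie :: real
  assumes "N > 0" "\<mu> > 0" "\<beta> > 0" "\<sigma> > 0" "\<gamma> \<ge> 0" "p \<ge> 0" "\<rho> < 1"
    and "R0 N \<mu> \<beta> \<sigma> \<gamma> p \<rho> > 1"
    and Se_def: "Se = (\<sigma> + \<mu>) * (\<gamma> + \<mu>) * N / (\<sigma> * \<beta> * (1 - \<rho>))"
    and Ie_def: "Ie = (\<mu> * N * \<sigma> * \<beta> * (1 - \<rho>) - (\<sigma> + \<mu>) * (\<gamma> + \<mu>) * (p + \<mu> * N))
                  / ((\<sigma> + \<mu>) * (\<gamma> + \<mu>) * \<beta> * (1 - \<rho>))"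
    and Ee_def: "Ee = (\<gamma> + \<mu>) / \<sigma> * Ie"
  shows "Se > 0" "Ee > 0" "Ie > 0"
    and "\<mu> * N = \<beta> / N * (1 - \<rho>) * Se * Ie + (p / N + \<mu>) * Se"
    and "(\<sigma> + \<mu>) * Ee = \<beta> / N * (1 - \<rho>) * Se * Ie"
    and "(\<gamma> + \<mu>) * Ie = \<sigma> * Ee"
proof -
  have "\<sigma> + \<mu> > 0" "\<gamma> + \<mu> > 0" "p + \<mu> * N > 0"
    using assms(1-6) by (simp_all add: add_pos_nonneg add_nonneg_pos)
  from \<open>\<sigma> + \<mu> > 0\<close> \<open>\<gamma> + \<mu> > 0\<close> \<open>p + \<mu> * N > 0\<close>
  have "(\<sigma> + \<mu>) * (\<gamma> + \<mu>) * (p + \<mu> * N) > 0" by simp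
  then have "(\<sigma> + \<mu>) * (\<gamma> + \<mu>) * (p + \<mu> * N) < \<mu> * N * \<sigma> * \<beta> * (1 - \<rho>)"
    using \<open>R0 N \<mu> \<beta> \<sigma> \<gamma> p \<rho> > 1\<close> by (simp add: R0_def less_divide_eq)
  then show "Ie > 0" unfolding Ie_def using assms(1-7) by (simp add: add_pos_nonneg)
  then show "Ee > 0" unfolding Ee_def using assms(2-5) by (simp add: add_pos_nonneg)
  show "Se > 0" unfolding Se_def using assms(1-7) by (simp add: add_pos_nonneg)
  show "(\<gamma> + \<mu>) * Ie = \<sigma> * Ee" unfolding Ee_def using assms(4) by simp
  define K b where "K = (\<sigma> + \<mu>) * (\<gamma> + \<mu>)" and "b = \<beta> * (1 - \<rho>)"
  have "K > 0" "b > 0" using \<open>\<sigma> + \<mu> > 0\<close> \<open>\<gamma> + \<mu> > 0\<close> assms(3,7) by (simp_all add: K_def b_def)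
  have Se_Kb: "Se = K * N / (\<sigma> * b)" and Ie_Kb: "Ie = (\<mu> * N * \<sigma> * b - K * (p + \<mu> * N)) / (K * b)"
    and rate_b: "\<beta> / N * (1 - \<rho>) = b / N"
    unfolding Se_def Ie_def K_def b_def by (simp_all add: ac_simps)
  show "(\<sigma> + \<mu>) * Ee = \<beta> / N * (1 - \<rho>) * Se * Ie"
    unfolding Ee_def Se_Kb rate_b using assms(1,4) \<open>b > 0\<close> by (simp add: K_def field_simps)
  show "\<mu> * N = \<beta> / N * (1 - \<rho>) * Se * Ie + (p / N + \<mu>) * Se"
    unfolding Se_Kb Ie_Kb rate_b using assms(1,4) \<open>K > 0\<close> \<open>b > 0\<close> by (simp add: field_simps)
qed

theorem mainTheorem13:
  fixes N \<mu> \<beta> \<sigma> \<gamma> p \<rho> :: real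
    and S E I R V :: "real \<Rightarrow> real"
  assumes params: "N > 0" "\<mu> > 0" "\<beta> > 0" "\<sigma> > 0" "\<gamma> > 0" "p > 0" "0 < \<rho>" "\<rho> < 1"
    and dS: "\<And>t. t \<ge> 0 \<Longrightarrow> (S has_real_derivative
              (\<mu> * N - \<beta> / N * S t * (1 - \<rho>) * I t - p / N * S t - \<mu> * S t)) (at t within {0..})"
    and dE: "\<And>t. t \<ge> 0 \<Longrightarrow> (E has_real_derivative
              (\<beta> / N * S t * (1 - \<rho>) * I t - (\<sigma> + \<mu>) * E t)) (at t within {0..})"
    and dI: "\<And>t. t \<ge> 0 \<Longrightarrow> (I has_real_derivative (\<sigma> * E t - (\<gamma> + \<mu>) * I t)) (at t within {0..})"
    and dR: "\<And>t. t \<ge> 0 \<Longrightarrow> (R has_real_derivative (\<gamma> * I t - \<mu> * R t)) (at t within {0..})"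
    and dV: "\<And>t. t \<ge> 0 \<Longrightarrow> (V has_real_derivative (p / N * S t - \<mu> * V t)) (at t within {0..})"
    and init_Sigma: "(S 0, E 0, I 0, R 0, V 0) \<in> SigmaSet N"
    and init_Omega: "(S 0, E 0, I 0) \<in> interior (OmegaSet N)"
    and R0_gt: "R0 N \<mu> \<beta> \<sigma> \<gamma> p \<rho> > 1"
  shows "let Se = (\<sigma> + \<mu>) * (\<gamma> + \<mu>) * N / (\<sigma> * \<beta> * (1 - \<rho>));
             Ie = (\<mu> * N * \<sigma> * \<beta> * (1 - \<rho>) - (\<sigma> + \<mu>) * (\<gamma> + \<mu>) * (p + \<mu> * N))
                  / ((\<sigma> + \<mu>) * (\<gamma> + \<mu>) * \<beta> * (1 - \<rho>));
             Ee = (\<gamma> + \<mu>) / \<sigma> * Ie;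
             Re = \<gamma> / \<mu> * Ie;
             Ve = p / (\<mu> * N) * Se
         in (S \<longlongrightarrow> Se) at_top \<and> (E \<longlongrightarrow> Ee) at_top \<and> (I \<longlongrightarrow> Ie) at_top
            \<and> (R \<longlongrightarrow> Re) at_top \<and> (V \<longlongrightarrow> Ve) at_top"
proof -
  define Se where "Se = (\<sigma> + \<mu>) * (\<gamma> + \<mu>) * N / (\<sigma> * \<beta> * (1 - \<rho>))"
  define Ie where "Ie = (\<mu> * N * \<sigma> * \<beta> * (1 - \<rho>) - (\<sigma> + \<mu>) * (\<gamma> + \<mu>) * (p + \<mu> * N))
                  / ((\<sigma> + \<mu>) * (\<gamma> + \<mu>) * \<beta> * (1 - \<rho>))"
  define Ee where "Ee = (\<gamma> + \<mu>) / \<sigma> * Ie"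
  note equilibrium = SEIRV_endemic_equilibrium[OF params(1-4) less_imp_le[OF params(5)]
      less_imp_le[OF params(6)] params(8) R0_gt Se_def Ie_def Ee_def]
  interpret SEI_endemic "\<mu> * N" "\<beta> / N * (1 - \<rho>)" "p / N + \<mu>" \<sigma> "\<sigma> + \<mu>" "\<gamma> + \<mu>" Se Ee Ie S E I
  proof
    fix t :: real assume "t \<ge> 0"
    show "(S has_real_derivative \<mu> * N - \<beta> / N * (1 - \<rho>) * S t * I t - (p / N + \<mu>) * S t)
        (at t within {0..})" using dS[OF \<open>t \<ge> 0\<close>] by (rule DERIV_cong) (simp add: algebra_simps)
    show "(E has_real_derivative \<beta> / N * (1 - \<rho>) * S t * I t - (\<sigma> + \<mu>) * E t) (at t within {0..})"
      using dE[OF \<open>t \<ge> 0\<close>] by (rule DERIV_cong) (simp add: algebra_simps)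
  qed (use params equilibrium dI interior_OmegaSet_pos[OF init_Omega] in \<open>auto intro: add_pos_pos\<close>)
  have "(R \<longlongrightarrow> \<gamma> * Ie / \<mu>) at_top"
    by (intro relaxation_ODE_tendsto[OF params(2) dR] tendsto_mult_left I_tendsto)
  moreover have "(V \<longlongrightarrow> p / N * Se / \<mu>) at_top"
    by (intro relaxation_ODE_tendsto[OF params(2) dV] tendsto_mult_left S_tendsto)
  ultimately show ?thesis
    using S_tendsto E_tendsto I_tendsto
    unfolding Let_def Se_def[symmetric] Ie_def[symmetric] Ee_def[symmetric] by (simp add: field_simps)
qed

end
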